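(* A valued Abelian group $(G,+,p)$ is of class $\mathcal{O}_0$ if and only if it may be enlarged to a valued Abelian group $(\tilde G,+,\tilde p)$ such that the set of elements of finite order of $\tilde G$ is dense in $\tilde G$.
   Context: A value on an Abelian group $G$ is $p\colon G\to[0,\infty)$ with $p(x)=0\iff x=0$, $p(-x)=p(x)$, $p(x+y)\leqslant p(x)+p(y)$; it induces the metric $p(x-y)$. $(G,+,p)$ is of class $\mathcal{O}_0$ if $\lim_{n\to\infty}p(na)/n=0$ for every $a\in G$. Enlarging means $G\subseteq\tilde G$, the addition of $\tilde G$ extends that of $G$ and $\tilde p$ extends $p$. *)

theory Defs
  imports Complex_Main "HOL-Algebra.Group"
begin

text \<open>A value on an Abelian group (the group is the whole type 'a).\<close>
definition is_value :: "('a::ab_group_add \<Rightarrow> real) \<Rightarrow> bool" where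
  "is_value p \<longleftrightarrow> (\<forall>x. p x \<ge> 0) \<and> (\<forall>x. p x = 0 \<longleftrightarrow> x = 0) \<and>
     (\<forall>x. p (- x) = p x) \<and> (\<forall>x y. p (x + y) \<le> p x + p y)"

definition class_O0 :: "('a::ab_group_add \<Rightarrow> real) \<Rightarrow> bool" where
  "class_O0 p \<longleftrightarrow> is_value p \<and>
     (\<forall>a. (\<lambda>n::nat. p (\<Sum>i<n. a) / real n) \<longlonglongrightarrow> 0)"

definition is_group_value :: "('b, 'c) monoid_scheme \<Rightarrow> ('b \<Rightarrow> real) \<Rightarrow> bool" where
  "is_group_value H q \<longleftrightarrow>
     (\<forall>x\<in>carrier H. q x \<ge> 0) \<and> (\<forall>x\<in>carrier H. q x = 0 \<longleftrightarrow> x = \<one>\<^bsub>H\<^esub>) \<and>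
     (\<forall>x\<in>carrier H. q (inv\<^bsub>H\<^esub> x) = q x) \<and>
     (\<forall>x\<in>carrier H. \<forall>y\<in>carrier H. q (x \<otimes>\<^bsub>H\<^esub> y) \<le> q x + q y)"

text \<open>(H, q) is an enlargement of (G, p), G identified with its image under the
  injective, value-preserving homomorphism e.\<close>
definition is_enlargement ::
  "('a::ab_group_add \<Rightarrow> real) \<Rightarrow> ('b, 'c) monoid_scheme \<Rightarrow> ('b \<Rightarrow> real) \<Rightarrow> ('a \<Rightarrow> 'b) \<Rightarrow> bool" where
  "is_enlargement p H q e \<longleftrightarrow> comm_group H \<and> is_group_value H q \<and>
     (\<forall>x. e x \<in> carrier H) \<and> inj e \<and>
     (\<forall>x y. e (x + y) = e x \<otimes>\<^bsub>H\<^esub> e y) \<and> (\<forall>x. q (e x) = p x)"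

definition torsion_dense :: "('b, 'c) monoid_scheme \<Rightarrow> ('b \<Rightarrow> real) \<Rightarrow> bool" where
  "torsion_dense H q \<longleftrightarrow> (\<forall>x\<in>carrier H. \<forall>\<epsilon>>0. \<exists>t\<in>carrier H.
     (\<exists>n::nat. n \<ge> 1 \<and> t [^]\<^bsub>H\<^esub> n = \<one>\<^bsub>H\<^esub>) \<and> q (x \<otimes>\<^bsub>H\<^esub> inv\<^bsub>H\<^esub> t) < \<epsilon>)"

end

theory Submission
  imports Defs "HOL-Library.Countable" "HOL-Algebra.Multiplicative_Group"
begin

text \<open>If \<open>e a = y t\<close> in an enlargement, with \<open>q(y) < \<epsilon>\<close> and \<open>t\<^sup>m = 1\<close>, then \<open>e(n a) = y\<^sup>n t\<^bsup>n mod m\<^esup>\<close>,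
  so \<open>p(n a) \<le> n\<epsilon> + m q(t)\<close>; hence \<open>p(n a)/n \<rightarrow> 0\<close>.

  Conversely, adjoin to \<open>G\<close> all rational multiples of its elements: the rational hull consists of
  formal sums \<open>g + \<Sum> f(h)\<cdot>[h]\<close> modulo \<open>k\<cdot>[h] = k h\<close> for integers \<open>k\<close>, valued by the infimum of
  \<open>p(g) + \<Sum> |f(h)| p(h)\<close> over all representatives. On \<open>G\<close> this value is \<open>p\<close> again, and \<open>[a]/m\<close> is an
  \<open>m\<close>-th root of \<open>a\<close> of value at most \<open>p(a)/m\<close>. Every \<open>x\<close> has a multiple \<open>x\<^sup>N = a\<close> in \<open>G\<close>; if \<open>p(n a)/n\<close>
  is small and \<open>r\<close> is the \<open>nN\<close>-th root of \<open>n a\<close>, then \<open>x r\<^sup>-\<^sup>1\<close> is a torsion element close to \<open>x\<close>.\<close>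

definition nmul :: "nat \<Rightarrow> 'a::ab_group_add \<Rightarrow> 'a" where
  "nmul n a = (\<Sum>i<n. a)"

lemma nmul_0 [simp]: "nmul 0 a = 0"
  by (simp add: nmul_def)

lemma nmul_Suc: "nmul (Suc n) a = a + nmul n a"
  by (simp add: nmul_def add.commute)

lemma nmul_add: "nmul (m + n) a = nmul m a + nmul n a"
  by (induction n) (simp_all add: nmul_Suc algebra_simps)

definition zmul :: "int \<Rightarrow> 'a::ab_group_add \<Rightarrow> 'a" where
  "zmul k a = nmul (nat k) a - nmul (nat (- k)) a"

lemma zmul_0 [simp]: "zmul 0 a = 0"
  by (simp add: zmul_def)

lemma zmul_1 [simp]: "zmul 1 a = a"
  by (simp add: zmul_def nmul_def)

lemma zmul_uminus: "zmul (- k) a = - zmul k a"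
  by (simp add: zmul_def)

lemma zmul_add: "zmul (k + l) a = zmul k a + zmul l a"
proof -
  have "nat k + nat l + nat (- k - l) = nat (k + l) + nat (- k) + nat (- l)"
    by linarith
  then have "nmul (nat k + nat l) a + nmul (nat (- k - l)) a
      = nmul (nat (k + l)) a + nmul (nat (- k) + nat (- l)) a"
    by (metis nmul_add add.assoc)
  then show ?thesis
    by (simp add: zmul_def nmul_add algebra_simps)
qed

lemma class_O0_iff:
  "class_O0 p \<longleftrightarrow> is_value p \<and> (\<forall>a. (\<lambda>n. p (nmul n a) / real n) \<longlonglongrightarrow> 0)"
  by (simp add: class_O0_def nmul_def)

locale valued =
  fixes p :: "'a::ab_group_add \<Rightarrow> real"
  assumes is_value: "is_value p"
begin

lemma nonneg: "0 \<le> p x"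
  and eq_0_iff: "p x = 0 \<longleftrightarrow> x = 0"
  and minus [simp]: "p (- x) = p x"
  and triangle: "p (x + y) \<le> p x + p y"
  using is_value by (auto simp: is_value_def)

lemma zero [simp]: "p 0 = 0"
  by (simp add: eq_0_iff)

lemma nmul_le: "p (nmul n a) \<le> real n * p a"
proof (induction n)
  case (Suc n)
  then show ?case
    using triangle[of a "nmul n a"] by (simp add: nmul_Suc algebra_simps)
qed simp

lemma zmul_le: "p (zmul k a) \<le> \<bar>real_of_int k\<bar> * p a"
  using nmul_le[of "nat k" a] nmul_le[of "nat (- k)" a] by (cases "k \<ge> 0") (simp_all add: zmul_def)

lemma sum_le: "p (\<Sum>i\<in>S. f i) \<le> (\<Sum>i\<in>S. p (f i))"
proof (induction S rule: infinite_finite_induct)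
  case (insert x F)
  then show ?case using triangle[of "f x" "sum f F"] by simp
qed simp_all

end

lemma group_value_one:
  assumes "group H" "is_group_value H q"
  shows "q \<one>\<^bsub>H\<^esub> = 0"
  using assms group.is_monoid monoid.one_closed by (fastforce simp: is_group_value_def)

lemma group_value_nat_pow_le:
  assumes "group H" "is_group_value H q" "x \<in> carrier H"
  shows "q (x [^]\<^bsub>H\<^esub> (n::nat)) \<le> real n * q x"
proof (induction n)
  case 0
  then show ?case
    using group_value_one[OF assms(1,2)] by simp
next
  case (Suc n)
  have "q (x [^]\<^bsub>H\<^esub> Suc n) \<le> q (x [^]\<^bsub>H\<^esub> n) + q x"
    using assms by (simp add: is_group_value_def group.is_monoid monoid.nat_pow_closed)
  with Suc show ?case
    by (simp add: algebra_simps)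
qed

lemma enlargement_nmul:
  assumes "is_enlargement p H q e"
  shows "e (nmul n a) = e a [^]\<^bsub>H\<^esub> n"
proof -
  interpret H: comm_group H
    using assms by (simp add: is_enlargement_def)
  have e: "e x \<in> carrier H" "e (x + y) = e x \<otimes>\<^bsub>H\<^esub> e y" for x y
    using assms by (simp_all add: is_enlargement_def)
  have "e 0 = \<one>\<^bsub>H\<^esub>"
    using e(2)[of 0 0] e(1)[of 0] by simp
  then show ?thesis
    by (induction n) (simp_all add: nmul_Suc e H.m_comm[OF e(1)])
qed

lemma LIMSEQ_div_real_0_if_sublinear:
  fixes u :: "nat \<Rightarrow> real"
  assumes nonneg: "\<And>n. 0 \<le> u n" and bound: "\<And>\<epsilon>. \<epsilon> > 0 \<Longrightarrow> \<exists>M. \<forall>n. u n \<le> real n * \<epsilon> + M"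
  shows "(\<lambda>n. u n / real n) \<longlonglongrightarrow> 0"
proof (rule LIMSEQ_I)
  fix r :: real assume "r > 0"
  then obtain M where M: "\<And>n. u n \<le> real n * (r / 2) + M"
    using bound[of "r / 2"] by auto
  obtain N :: nat where N: "real N > 2 * M / r"
    using reals_Archimedean2 by blast
  have "norm (u n / real n - 0) < r" if "n \<ge> Suc N" for n
  proof -
    have "2 * M < real N * r"
      using N \<open>r > 0\<close> by (simp add: field_simps)
    also have "\<dots> \<le> real n * r"
      using that \<open>r > 0\<close> by simp
    finally have n: "real n > 0" "2 * M < real n * r"
      using that by simp_all
    have "u n / real n \<le> r / 2 + M / real n"
      using M[of n] n(1) by (simp add: field_simps)
    also have "\<dots> < r"
      using n by (simp add: field_simps)
    finally show ?thesis
      using nonneg[of n] by simp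
  qed
  then show "\<exists>N. \<forall>n\<ge>N. norm (u n / real n - 0) < r"
    by blast
qed

lemma group_value_pow_mult_torsion_le:
  assumes H: "comm_group H" and q: "is_group_value H q"
    and y: "y \<in> carrier H" and t: "t \<in> carrier H" "m \<ge> 1" "t [^]\<^bsub>H\<^esub> (m::nat) = \<one>\<^bsub>H\<^esub>"
  shows "q ((y \<otimes>\<^bsub>H\<^esub> t) [^]\<^bsub>H\<^esub> (n::nat)) \<le> real n * q y + real m * q t"
proof -
  interpret H: comm_group H
    by (rule H)
  have "t [^]\<^bsub>H\<^esub> n = (t [^]\<^bsub>H\<^esub> m) [^]\<^bsub>H\<^esub> (n div m) \<otimes>\<^bsub>H\<^esub> t [^]\<^bsub>H\<^esub> (n mod m)"
    using t(1) by (simp add: H.nat_pow_mult H.nat_pow_pow)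
  then have "(y \<otimes>\<^bsub>H\<^esub> t) [^]\<^bsub>H\<^esub> n = y [^]\<^bsub>H\<^esub> n \<otimes>\<^bsub>H\<^esub> t [^]\<^bsub>H\<^esub> (n mod m)"
    using y t by (simp add: H.nat_pow_distrib)
  then have "q ((y \<otimes>\<^bsub>H\<^esub> t) [^]\<^bsub>H\<^esub> n) \<le> q (y [^]\<^bsub>H\<^esub> n) + q (t [^]\<^bsub>H\<^esub> (n mod m))"
    using q y t(1) by (simp add: is_group_value_def)
  also have "\<dots> \<le> real n * q y + real (n mod m) * q t"
    using y t(1) by (intro add_mono group_value_nat_pow_le[OF H.is_group q])
  also have "\<dots> \<le> real n * q y + real m * q t"
    using q t by (intro add_left_mono mult_right_mono) (auto simp: is_group_value_def less_imp_le_nat)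
  finally show ?thesis .
qed

lemma class_O0_if_torsion_dense_enlargement:
  assumes p: "is_value p" and enl: "is_enlargement p H q e" and dense: "torsion_dense H q"
  shows "class_O0 p"
  unfolding class_O0_iff
proof (intro conjI allI p LIMSEQ_div_real_0_if_sublinear)
  interpret H: comm_group H
    using enl by (simp add: is_enlargement_def)
  have gv: "is_group_value H q" and ec: "\<And>x. e x \<in> carrier H" and eq: "\<And>x. q (e x) = p x"
    using enl by (auto simp: is_enlargement_def)
  fix a :: 'a and n :: nat and \<epsilon> :: real
  show "0 \<le> p (nmul n a)"
    using valued.nonneg[OF valued.intro[OF p]] .
  assume "\<epsilon> > 0"
  then obtain t m where t: "t \<in> carrier H" "m \<ge> 1" "t [^]\<^bsub>H\<^esub> (m::nat) = \<one>\<^bsub>H\<^esub>"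
    and close: "q (e a \<otimes>\<^bsub>H\<^esub> inv\<^bsub>H\<^esub> t) < \<epsilon>"
    using dense ec unfolding torsion_dense_def by blast
  define y where "y = e a \<otimes>\<^bsub>H\<^esub> inv\<^bsub>H\<^esub> t"
  have y: "y \<in> carrier H" "e a = y \<otimes>\<^bsub>H\<^esub> t"
    using t(1) ec by (simp_all add: y_def H.m_assoc)
  have "p (nmul n a) \<le> real n * \<epsilon> + real m * q t" for n
  proof -
    have "p (nmul n a) \<le> real n * q y + real m * q t"
      using group_value_pow_mult_torsion_le[OF H.comm_group_axioms gv y(1) t, of n]
      by (simp flip: eq y(2) add: enlargement_nmul[OF enl])
    also have "\<dots> \<le> real n * \<epsilon> + real m * q t"
      using close by (simp add: y_def mult_left_mono)
    finally show ?thesis .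
  qed
  then show "\<exists>M. \<forall>n. p (nmul n a) \<le> real n * \<epsilon> + M"
    by blast
qed

text \<open>The torsion element near \<open>x\<close> is \<open>x r\<^sup>-\<^sup>1\<close>, where \<open>x\<^sup>N = e a\<close> and \<open>r\<close> is an \<open>nN\<close>-th root of
  \<open>e (n a)\<close>, with \<open>n\<close> so large that \<open>p(n a)/n\<close> is small.\<close>

lemma torsion_dense_if_roots:
  assumes enl: "is_enlargement p H q e" and O0: "class_O0 p"
    and multiple: "\<And>x. x \<in> carrier H \<Longrightarrow> \<exists>N\<ge>1. \<exists>a. x [^]\<^bsub>H\<^esub> (N::nat) = e a"
    and root: "\<And>a m. m \<ge> 1 \<Longrightarrow> \<exists>r\<in>carrier H. r [^]\<^bsub>H\<^esub> (m::nat) = e a \<and> q r \<le> p a / real m"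
  shows "torsion_dense H q"
  unfolding torsion_dense_def
proof (intro ballI allI impI)
  interpret H: comm_group H
    using enl by (simp add: is_enlargement_def)
  fix x and \<epsilon> :: real assume x: "x \<in> carrier H" and "\<epsilon> > 0"
  obtain N :: nat and a where N: "N \<ge> 1" "x [^]\<^bsub>H\<^esub> N = e a"
    using multiple[OF x] by blast
  obtain n0 where "\<forall>n\<ge>n0. norm (p (nmul n a) / real n - 0) < \<epsilon>"
    using O0 \<open>\<epsilon> > 0\<close> unfolding class_O0_iff by (meson LIMSEQ_D)
  then obtain n where n: "n \<ge> 1" "p (nmul n a) / real n < \<epsilon>"
    by (metis abs_less_iff diff_zero max.cobounded1 max.cobounded2 real_norm_def)
  obtain r where r: "r \<in> carrier H" "r [^]\<^bsub>H\<^esub> (n * N) = e (nmul n a)"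
    and qr: "q r \<le> p (nmul n a) / real (n * N)"
    using root[of "n * N" "nmul n a"] n(1) N(1) by auto
  define t where "t = x \<otimes>\<^bsub>H\<^esub> inv\<^bsub>H\<^esub> r"
  have "x [^]\<^bsub>H\<^esub> (n * N) = (x [^]\<^bsub>H\<^esub> N) [^]\<^bsub>H\<^esub> n"
    using x by (simp add: H.nat_pow_pow mult.commute)
  also have "\<dots> = r [^]\<^bsub>H\<^esub> (n * N)"
    using N(2) r(2) by (simp add: enlargement_nmul[OF enl])
  moreover have "t [^]\<^bsub>H\<^esub> (n * N) = x [^]\<^bsub>H\<^esub> (n * N) \<otimes>\<^bsub>H\<^esub> inv\<^bsub>H\<^esub> (r [^]\<^bsub>H\<^esub> (n * N))"
    using x r(1) by (simp add: t_def H.nat_pow_distrib H.nat_pow_inv)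
  ultimately have "t [^]\<^bsub>H\<^esub> (n * N) = \<one>\<^bsub>H\<^esub>"
    using r(1) by simp
  moreover have "x \<otimes>\<^bsub>H\<^esub> inv\<^bsub>H\<^esub> t = r"
    using x r by (simp add: t_def H.inv_mult_group H.m_lcomm[of x r "inv\<^bsub>H\<^esub> x"])
  moreover have "0 \<le> p (nmul n a)"
    using enl unfolding is_enlargement_def is_group_value_def by metis
  then have "p (nmul n a) / real (n * N) \<le> p (nmul n a) / real n"
    using N(1) n(1) by (intro divide_left_mono) auto
  ultimately show "\<exists>t\<in>carrier H. (\<exists>k::nat. k \<ge> 1 \<and> t [^]\<^bsub>H\<^esub> k = \<one>\<^bsub>H\<^esub>) \<and> q (x \<otimes>\<^bsub>H\<^esub> inv\<^bsub>H\<^esub> t) < \<epsilon>"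
    using x r qr n N(1) by (intro bexI[of _ t] conjI exI[of _ "n * N"]) (auto simp: t_def)
qed

section \<open>Copying an enlargement along an injection\<close>

definition image_monoid :: "('x \<Rightarrow> 'y) \<Rightarrow> ('x, 'm) monoid_scheme \<Rightarrow> 'y monoid" where
  "image_monoid \<phi> H = \<lparr>carrier = \<phi> ` carrier H,
     mult = \<lambda>u v. \<phi> (inv_into (carrier H) \<phi> u \<otimes>\<^bsub>H\<^esub> inv_into (carrier H) \<phi> v),
     one = \<phi> \<one>\<^bsub>H\<^esub>\<rparr>"

context
  fixes \<phi> :: "'x \<Rightarrow> 'y" and H :: "('x, 'm) monoid_scheme"
  assumes inj: "inj_on \<phi> (carrier H)" and H: "comm_group H"
begin

interpretation H: comm_group H
  by (rule H)

lemma image_monoid_carrier: "carrier (image_monoid \<phi> H) = \<phi> ` carrier H"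
  and image_monoid_one: "\<one>\<^bsub>image_monoid \<phi> H\<^esub> = \<phi> \<one>\<^bsub>H\<^esub>"
  by (simp_all add: image_monoid_def)

lemma image_monoid_mult:
  "x \<in> carrier H \<Longrightarrow> y \<in> carrier H \<Longrightarrow> \<phi> x \<otimes>\<^bsub>image_monoid \<phi> H\<^esub> \<phi> y = \<phi> (x \<otimes>\<^bsub>H\<^esub> y)"
  by (simp add: image_monoid_def inv_into_f_f[OF inj])

lemma comm_group_image_monoid: "comm_group (image_monoid \<phi> H)"
proof (rule comm_groupI)
  fix u assume "u \<in> carrier (image_monoid \<phi> H)"
  then obtain x where "x \<in> carrier H" "u = \<phi> x"
    by (auto simp: image_monoid_carrier)
  then show "\<exists>v\<in>carrier (image_monoid \<phi> H). v \<otimes>\<^bsub>image_monoid \<phi> H\<^esub> u = \<one>\<^bsub>image_monoid \<phi> H\<^esub>"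
    by (intro bexI[of _ "\<phi> (inv\<^bsub>H\<^esub> x)"]) (simp_all add: image_monoid_mult image_monoid_one image_monoid_carrier)
qed (auto simp: image_monoid_carrier image_monoid_mult image_monoid_one H.m_ac)

interpretation image: comm_group "image_monoid \<phi> H"
  by (rule comm_group_image_monoid)

lemma image_monoid_inv: "x \<in> carrier H \<Longrightarrow> inv\<^bsub>image_monoid \<phi> H\<^esub> (\<phi> x) = \<phi> (inv\<^bsub>H\<^esub> x)"
  by (rule image.inv_equality) (simp_all add: image_monoid_mult image_monoid_one image_monoid_carrier)

lemma image_monoid_pow: "x \<in> carrier H \<Longrightarrow> \<phi> x [^]\<^bsub>image_monoid \<phi> H\<^esub> (n::nat) = \<phi> (x [^]\<^bsub>H\<^esub> n)"
  by (induction n) (simp_all add: image_monoid_one image_monoid_mult)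

lemma is_group_value_image_monoid:
  assumes "is_group_value H q"
  shows "is_group_value (image_monoid \<phi> H) (q \<circ> inv_into (carrier H) \<phi>)"
proof -
  have one: "\<phi> x = \<phi> \<one>\<^bsub>H\<^esub> \<longleftrightarrow> x = \<one>\<^bsub>H\<^esub>" if "x \<in> carrier H" for x
    using that inj by (simp add: inj_on_eq_iff)
  show ?thesis
    using assms unfolding is_group_value_def image_monoid_carrier
    by (auto simp: inv_into_f_f[OF inj] one image_monoid_mult image_monoid_inv image_monoid_one)
qed

lemma enlargement_image_monoid:
  assumes "is_enlargement p H q e"
  shows "is_enlargement p (image_monoid \<phi> H) (q \<circ> inv_into (carrier H) \<phi>) (\<phi> \<circ> e)"
proof -
  have e: "\<And>x. e x \<in> carrier H" "inj e" "\<And>x y. e (x + y) = e x \<otimes>\<^bsub>H\<^esub> e y" "\<And>x. q (e x) = p x"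
    and gv: "is_group_value H q"
    using assms by (auto simp: is_enlargement_def)
  have "inj (\<phi> \<circ> e)"
    using e(1,2) inj by (auto intro!: comp_inj_on inj_on_subset[OF inj])
  then show ?thesis
    unfolding is_enlargement_def using e inj
    by (simp add: comm_group_image_monoid is_group_value_image_monoid[OF gv] image_monoid_carrier
        image_monoid_mult)
qed

lemma torsion_dense_image_monoid:
  assumes "torsion_dense H q"
  shows "torsion_dense (image_monoid \<phi> H) (q \<circ> inv_into (carrier H) \<phi>)"
  unfolding torsion_dense_def image_monoid_carrier
proof (intro ballI allI impI; elim imageE)
  fix u x and \<epsilon> :: real assume "\<epsilon> > 0" and x: "x \<in> carrier H" "u = \<phi> x"
  then obtain t n where "t \<in> carrier H" "n \<ge> 1" "t [^]\<^bsub>H\<^esub> (n::nat) = \<one>\<^bsub>H\<^esub>"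
      "q (x \<otimes>\<^bsub>H\<^esub> inv\<^bsub>H\<^esub> t) < \<epsilon>"
    using assms unfolding torsion_dense_def by blast
  with x inj show "\<exists>s\<in>\<phi> ` carrier H. (\<exists>n::nat. n \<ge> 1 \<and> s [^]\<^bsub>image_monoid \<phi> H\<^esub> n = \<one>\<^bsub>image_monoid \<phi> H\<^esub>)
      \<and> (q \<circ> inv_into (carrier H) \<phi>) (u \<otimes>\<^bsub>image_monoid \<phi> H\<^esub> inv\<^bsub>image_monoid \<phi> H\<^esub> s) < \<epsilon>"
    by (intro bexI[of _ "\<phi> t"])
      (auto simp: image_monoid_pow image_monoid_one image_monoid_inv image_monoid_mult)
qed

end

lemma torsion_dense_enlargement_transfer:
  fixes H :: "('x, 'm) monoid_scheme" and \<phi> :: "'x \<Rightarrow> 'y"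
  assumes "is_enlargement p H q e" "torsion_dense H q" "inj_on \<phi> (carrier H)"
  shows "\<exists>(H' :: 'y monoid) q' e'. is_enlargement p H' q' e' \<and> torsion_dense H' q'"
proof -
  have H: "comm_group H"
    using assms(1) by (simp add: is_enlargement_def)
  show ?thesis
    using enlargement_image_monoid[OF assms(3) H assms(1)]
      torsion_dense_image_monoid[OF assms(3) H assms(2)] by blast
qed

lemma torsion_dense_if_finite:
  assumes "group H" "is_group_value H q" "finite (carrier H)"
  shows "torsion_dense H q"
  unfolding torsion_dense_def
proof (intro ballI allI impI)
  interpret H: group H
    by (rule assms(1))
  fix x and \<epsilon> :: real assume "x \<in> carrier H" "\<epsilon> > 0"
  moreover have "order H \<ge> 1"
    using assms(3) H.order_gt_0_iff_finite by (simp add: Suc_le_eq)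
  ultimately show "\<exists>t\<in>carrier H. (\<exists>n::nat. n \<ge> 1 \<and> t [^]\<^bsub>H\<^esub> n = \<one>\<^bsub>H\<^esub>) \<and> q (x \<otimes>\<^bsub>H\<^esub> inv\<^bsub>H\<^esub> t) < \<epsilon>"
    using H.pow_order_eq_1 group_value_one[OF assms(1,2)] by (intro bexI[of _ x]) auto
qed

definition additive_monoid :: "'a::ab_group_add monoid" where
  "additive_monoid = \<lparr>carrier = UNIV, mult = (+), one = 0\<rparr>"

lemma comm_group_additive_monoid: "comm_group additive_monoid"
proof (rule comm_groupI)
  fix x :: 'a
  show "\<exists>y\<in>carrier additive_monoid. y \<otimes>\<^bsub>additive_monoid\<^esub> x = \<one>\<^bsub>additive_monoid\<^esub>"
    by (intro bexI[of _ "- x"]) (simp_all add: additive_monoid_def)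
qed (simp_all add: additive_monoid_def add.assoc add.commute)

lemma enlargement_additive_monoid:
  assumes "is_value p"
  shows "is_enlargement p additive_monoid p id"
proof -
  interpret comm_group additive_monoid
    by (rule comm_group_additive_monoid)
  have "inv\<^bsub>additive_monoid\<^esub> x = - x" for x :: 'a
    by (rule inv_equality) (simp_all add: additive_monoid_def)
  with assms show ?thesis
    unfolding is_enlargement_def is_group_value_def is_value_def
    by (simp add: comm_group_additive_monoid) (simp add: additive_monoid_def)
qed

section \<open>The rational hull\<close>

text \<open>A pair \<open>(g, f)\<close> of \<open>pre_hull\<close> stands for the formal sum \<open>g + \<Sum>\<^sub>h f h \<cdot> [h]\<close> with rational
  coefficients; \<open>hull_rel\<close> identifies \<open>[h]\<close> with \<open>h\<close> for integer coefficients, so in the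
  quotient every element of \<open>G\<close> acquires all its rational multiples. The coefficient of \<open>[0]\<close>
  is forced to vanish: it could only contribute a nonzero element of value zero.\<close>

type_synonym 'a formal_sum = "'a \<times> ('a \<Rightarrow> rat)"

definition pre_hull :: "'a::ab_group_add formal_sum monoid" where
  "pre_hull = \<lparr>carrier = {x. finite {h. snd x h \<noteq> 0} \<and> snd x 0 = 0},
     mult = (\<lambda>x y. (fst x + fst y, \<lambda>h. snd x h + snd y h)),
     one = (0, \<lambda>h. 0)\<rparr>"

lemma pre_hull_carrier: "x \<in> carrier pre_hull \<longleftrightarrow> finite {h. snd x h \<noteq> 0} \<and> snd x 0 = 0"
  and pre_hull_mult: "x \<otimes>\<^bsub>pre_hull\<^esub> y = (fst x + fst y, \<lambda>h. snd x h + snd y h)"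
  and pre_hull_one: "\<one>\<^bsub>pre_hull\<^esub> = (0, \<lambda>h. 0)"
  by (simp_all add: pre_hull_def)

lemma finite_support_add:
  "finite {h. f h \<noteq> 0} \<Longrightarrow> finite {h. g h \<noteq> 0} \<Longrightarrow> finite {h. f h + g h \<noteq> (0::'b::monoid_add)}"
  by (rule finite_subset[of _ "{h. f h \<noteq> 0} \<union> {h. g h \<noteq> 0}"]) auto

lemma comm_group_pre_hull: "comm_group pre_hull"
proof (rule comm_groupI)
  fix x assume "x \<in> carrier pre_hull"
  then show "\<exists>y\<in>carrier pre_hull. y \<otimes>\<^bsub>pre_hull\<^esub> x = \<one>\<^bsub>pre_hull\<^esub>"
    by (intro bexI[of _ "(- fst x, \<lambda>h. - snd x h)"])
      (auto simp: pre_hull_carrier pre_hull_mult pre_hull_one)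
qed (auto simp: pre_hull_carrier pre_hull_mult pre_hull_one finite_support_add algebra_simps)

interpretation pre_hull: comm_group pre_hull
  by (rule comm_group_pre_hull)

lemma pre_hull_inv: "x \<in> carrier pre_hull \<Longrightarrow> inv\<^bsub>pre_hull\<^esub> x = (- fst x, \<lambda>h. - snd x h)"
  by (rule pre_hull.inv_equality) (auto simp: pre_hull_carrier pre_hull_mult pre_hull_one)

lemma pre_hull_pow: "x [^]\<^bsub>pre_hull\<^esub> (n::nat) = (nmul n (fst x), \<lambda>h. of_nat n * snd x h)"
  by (induction n) (simp_all add: pre_hull_mult pre_hull_one nmul_Suc algebra_simps)

definition int_valued :: "('a \<Rightarrow> rat) \<Rightarrow> bool" where
  "int_valued f \<longleftrightarrow> (\<forall>h. f h \<in> \<int>)"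

definition lincomb :: "('a::ab_group_add \<Rightarrow> rat) \<Rightarrow> 'a" where
  "lincomb f = (\<Sum>h\<in>{h. f h \<noteq> 0}. zmul \<lfloor>f h\<rfloor> h)"

lemma lincomb_superset:
  "finite S \<Longrightarrow> {h. f h \<noteq> 0} \<subseteq> S \<Longrightarrow> lincomb f = (\<Sum>h\<in>S. zmul \<lfloor>f h\<rfloor> h)"
  unfolding lincomb_def by (rule sum.mono_neutral_left) auto

lemma lincomb_add:
  assumes "finite {h. f h \<noteq> 0}" "finite {h. g h \<noteq> 0}" "int_valued f"
  shows "lincomb (\<lambda>h. f h + g h) = lincomb f + lincomb g"
proof -
  let ?S = "{h. f h \<noteq> 0} \<union> {h. g h \<noteq> 0}"
  have "\<lfloor>f h + g h\<rfloor> = \<lfloor>f h\<rfloor> + \<lfloor>g h\<rfloor>" for h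
    using \<open>int_valued f\<close> by (auto simp: int_valued_def elim: Ints_cases)
  then have "(\<Sum>h\<in>?S. zmul \<lfloor>f h + g h\<rfloor> h) = (\<Sum>h\<in>?S. zmul \<lfloor>f h\<rfloor> h) + (\<Sum>h\<in>?S. zmul \<lfloor>g h\<rfloor> h)"
    by (simp add: zmul_add sum.distrib)
  with assms(1,2) show ?thesis
    by (subst (1 2 3) lincomb_superset[of ?S]) auto
qed

lemma lincomb_uminus:
  assumes "int_valued f"
  shows "lincomb (\<lambda>h. - f h) = - lincomb f"
proof -
  have "\<lfloor>- f h\<rfloor> = - \<lfloor>f h\<rfloor>" for h
    using assms[unfolded int_valued_def, rule_format, of h] by (auto elim: Ints_cases)
  then show ?thesis
    by (simp add: lincomb_def zmul_uminus sum_negf)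
qed

lemma lincomb_zero [simp]: "lincomb (\<lambda>h. 0) = 0"
  by (simp add: lincomb_def)

lemma lincomb_single: "lincomb (\<lambda>h. if h = a then 1 else 0) = a"
  by (cases "a = 0") (simp_all add: lincomb_def)

definition hull_rel :: "'a::ab_group_add formal_sum set" where
  "hull_rel = {x \<in> carrier pre_hull. int_valued (snd x) \<and> fst x = - lincomb (snd x)}"

lemma mem_hull_rel:
  "x \<in> hull_rel \<longleftrightarrow> x \<in> carrier pre_hull \<and> int_valued (snd x) \<and> fst x = - lincomb (snd x)"
  unfolding hull_rel_def by blast

lemma hull_rel_subset: "hull_rel \<subseteq> carrier pre_hull"
  unfolding hull_rel_def by blast

lemma subgroup_hull_rel: "subgroup (hull_rel :: 'a::ab_group_add formal_sum set) pre_hull"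
proof (rule pre_hull.subgroupI)
  show "hull_rel \<subseteq> carrier pre_hull"
    by (rule hull_rel_subset)
  have "(0, \<lambda>h. 0) \<in> hull_rel"
    by (simp add: mem_hull_rel pre_hull_carrier int_valued_def)
  then show "hull_rel \<noteq> {}"
    by blast
next
  fix x :: "'a formal_sum" assume "x \<in> hull_rel"
  then show "inv\<^bsub>pre_hull\<^esub> x \<in> hull_rel"
    by (auto simp: mem_hull_rel pre_hull_inv pre_hull_carrier int_valued_def lincomb_uminus)
next
  fix x y :: "'a formal_sum" assume "x \<in> hull_rel" "y \<in> hull_rel"
  then show "x \<otimes>\<^bsub>pre_hull\<^esub> y \<in> hull_rel"
    by (auto simp: mem_hull_rel pre_hull_mult pre_hull_carrier int_valued_def
        lincomb_add finite_support_add)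
qed

interpretation hull_rel: normal hull_rel pre_hull
  by (rule pre_hull.subgroup_imp_normal[OF subgroup_hull_rel])

abbreviation rat_hull :: "'a::ab_group_add formal_sum set monoid" where
  "rat_hull \<equiv> pre_hull Mod hull_rel"

abbreviation hull_class :: "'a::ab_group_add formal_sum \<Rightarrow> 'a formal_sum set" where
  "hull_class x \<equiv> hull_rel #>\<^bsub>pre_hull\<^esub> x"

definition hull_emb :: "'a::ab_group_add \<Rightarrow> 'a formal_sum set" where
  "hull_emb a = hull_class (a, \<lambda>h. 0)"

lemma comm_group_rat_hull: "comm_group rat_hull"
  by (rule pre_hull.abelian_FactGroup[OF subgroup_hull_rel])

lemma rat_hull_carrier: "carrier rat_hull = hull_class ` carrier pre_hull"
  by (rule carrier_FactGroup)

lemma hull_class_mult: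
  "x \<in> carrier pre_hull \<Longrightarrow> y \<in> carrier pre_hull \<Longrightarrow>
    hull_class x \<otimes>\<^bsub>rat_hull\<^esub> hull_class y = hull_class (x \<otimes>\<^bsub>pre_hull\<^esub> y)"
  by (simp add: hull_rel.rcos_sum)

lemma hull_class_inv:
  assumes "x \<in> carrier pre_hull"
  shows "inv\<^bsub>rat_hull\<^esub> (hull_class x) = hull_class (inv\<^bsub>pre_hull\<^esub> x)"
proof -
  have "hull_class x \<in> carrier rat_hull"
    using assms rat_hull_carrier by blast
  from hull_rel.inv_FactGroup[OF this] hull_rel.rcos_inv[OF assms] show ?thesis
    by (rule trans)
qed

lemma hull_class_pow:
  "x \<in> carrier pre_hull \<Longrightarrow> hull_class x [^]\<^bsub>rat_hull\<^esub> (n::nat) = hull_class (x [^]\<^bsub>pre_hull\<^esub> n)"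
  by (rule hull_rel.FactGroup_pow)

lemma hull_class_rel: "x \<in> hull_rel \<Longrightarrow> hull_class x = hull_rel"
  by (rule hull_rel.rcos_const[OF pre_hull.is_group])

lemma hull_class_self: "x \<in> carrier pre_hull \<Longrightarrow> x \<in> hull_class x"
  by (rule pre_hull.rcos_self[OF _ subgroup_hull_rel])

lemma constant_in_pre_hull: "(a, \<lambda>h. 0) \<in> carrier pre_hull"
  by (simp add: pre_hull_carrier)

lemma hull_emb_carrier: "hull_emb a \<in> carrier rat_hull"
  unfolding hull_emb_def rat_hull_carrier by (rule imageI[OF constant_in_pre_hull])

lemma hull_emb_add: "hull_emb (a + b) = hull_emb a \<otimes>\<^bsub>rat_hull\<^esub> hull_emb b"
  unfolding hull_emb_def hull_class_mult[OF constant_in_pre_hull constant_in_pre_hull]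
  by (simp add: pre_hull_mult)

lemma inj_hull_emb: "inj hull_emb"
proof (rule injI)
  fix a b :: 'a assume "hull_emb a = hull_emb b"
  then have "(a, \<lambda>h. 0) \<in> hull_class (b, \<lambda>h. 0)"
    using hull_class_self[OF constant_in_pre_hull[of a]] by (simp add: hull_emb_def)
  then have "(a, \<lambda>h. 0) \<otimes>\<^bsub>pre_hull\<^esub> inv\<^bsub>pre_hull\<^esub> (b, \<lambda>h::'a. 0::rat) \<in> hull_rel"
    by (rule subgroup.rcos_module_imp[OF subgroup_hull_rel pre_hull.is_group constant_in_pre_hull])
  then show "a = b"
    by (simp add: mem_hull_rel pre_hull_inv constant_in_pre_hull pre_hull_mult)
qed

lemma hull_class_int_valued:
  assumes x: "x \<in> carrier pre_hull" and "int_valued (snd x)"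
  shows "hull_class x = hull_emb (fst x + lincomb (snd x))"
proof -
  define k where "k = (lincomb (snd x), \<lambda>h. - snd x h)"
  have "k \<in> carrier pre_hull"
    using x unfolding pre_hull_carrier k_def by simp
  moreover have "int_valued (snd k)"
    using assms(2) by (simp add: k_def int_valued_def)
  moreover have "fst k = - lincomb (snd k)"
    using assms(2) by (simp add: k_def lincomb_uminus)
  ultimately have "k \<in> hull_rel"
    unfolding mem_hull_rel by blast
  then have "k \<otimes>\<^bsub>pre_hull\<^esub> x \<in> hull_class x"
    by (rule pre_hull.rcosI[OF _ hull_rel_subset x])
  then have "hull_class x = hull_class (k \<otimes>\<^bsub>pre_hull\<^esub> x)"
    by (rule pre_hull.repr_independence[OF _ x subgroup_hull_rel])
  also have "k \<otimes>\<^bsub>pre_hull\<^esub> x = (fst x + lincomb (snd x), \<lambda>h. 0)"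
    by (simp add: k_def pre_hull_mult add.commute)
  finally show ?thesis
    unfolding hull_emb_def .
qed

lemma common_denominator:
  fixes f :: "'b \<Rightarrow> rat"
  assumes "finite S"
  shows "\<exists>N>0. \<forall>h\<in>S. of_nat N * f h \<in> \<int>"
  using assms
proof (induction S rule: finite_induct)
  case (insert h S)
  then obtain N where N: "N > 0" "\<forall>h\<in>S. of_nat N * f h \<in> \<int>" by blast
  obtain a b where ab: "quotient_of (f h) = (a, b)" by (cases "quotient_of (f h)")
  then have b: "b > 0" and fh: "f h = of_int a / of_int b"
    by (simp_all add: quotient_of_denom_pos quotient_of_div)
  have "of_nat (N * nat b) * f h = of_int (int N * a)"
    using b by (simp add: fh field_simps)
  moreover have "of_nat (N * nat b) * f h' \<in> \<int>" if "h' \<in> S" for h'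
  proof -
    have "of_nat (N * nat b) * f h' = of_int b * (of_nat N * f h')"
      using b by (simp add: algebra_simps)
    then show ?thesis
      using N(2) that by (metis Ints_mult Ints_of_int)
  qed
  ultimately show ?case
    using N b by (intro exI[of _ "N * nat b"]) (auto simp del: of_nat_mult)
qed (auto intro: exI[of _ 1])

lemma hull_multiple_in_emb:
  assumes "C \<in> carrier rat_hull"
  shows "\<exists>N\<ge>1. \<exists>a. C [^]\<^bsub>rat_hull\<^esub> (N::nat) = hull_emb a"
proof -
  obtain x where x: "x \<in> carrier pre_hull" "C = hull_class x"
    using assms rat_hull_carrier by blast
  then obtain N where "N > 0" and N: "\<forall>h\<in>{h. snd x h \<noteq> 0}. of_nat N * snd x h \<in> \<int>"
    using common_denominator[of "{h. snd x h \<noteq> 0}" "snd x"] by (auto simp: pre_hull_carrier)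
  have "int_valued (snd (x [^]\<^bsub>pre_hull\<^esub> N))"
    unfolding int_valued_def pre_hull_pow snd_conv
  proof
    fix h show "of_nat N * snd x h \<in> \<int>"
      using N by (cases "snd x h = 0") auto
  qed
  then have "C [^]\<^bsub>rat_hull\<^esub> N = hull_emb (fst (x [^]\<^bsub>pre_hull\<^esub> N) + lincomb (snd (x [^]\<^bsub>pre_hull\<^esub> N)))"
    using x by (simp add: hull_class_pow hull_class_int_valued)
  moreover have "N \<ge> 1"
    using \<open>N > 0\<close> by simp
  ultimately show ?thesis
    by blast
qed

lemma hull_emb_0: "hull_emb 0 = \<one>\<^bsub>rat_hull\<^esub>"
  using hull_class_rel[OF subgroup.one_closed[OF subgroup_hull_rel]]
  by (simp add: hull_emb_def pre_hull_one)

definition hull_root :: "nat \<Rightarrow> 'a::ab_group_add \<Rightarrow> 'a formal_sum" where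
  "hull_root m a = (0, \<lambda>h. if h = a \<and> a \<noteq> 0 then 1 / of_nat m else 0)"

lemma hull_root_carrier: "hull_root m a \<in> carrier pre_hull"
  unfolding pre_hull_carrier hull_root_def by (auto intro: finite_subset[of _ "{a}"])

lemma hull_root_pow:
  assumes "m \<ge> 1"
  shows "hull_class (hull_root m a) [^]\<^bsub>rat_hull\<^esub> m = hull_emb a"
proof (cases "a = 0")
  case True
  then have "hull_root m a [^]\<^bsub>pre_hull\<^esub> m = (0, \<lambda>h. 0)"
    by (simp add: hull_root_def pre_hull_pow nmul_def)
  then show ?thesis
    using True by (simp add: hull_class_pow[OF hull_root_carrier] hull_emb_def)
next
  case False
  define x where "x = hull_root m a [^]\<^bsub>pre_hull\<^esub> m"
  have x_eq: "x = (0, \<lambda>h. if h = a then 1 else 0)"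
    using assms False by (simp add: x_def hull_root_def pre_hull_pow nmul_def fun_eq_iff)
  have "x \<in> carrier pre_hull"
    by (simp add: x_def hull_root_carrier)
  moreover have "int_valued (snd x)"
    by (simp add: x_eq int_valued_def)
  ultimately have "hull_class x = hull_emb a"
    by (simp add: hull_class_int_valued) (simp add: x_eq lincomb_single)
  then show ?thesis
    by (simp add: x_def hull_class_pow[OF hull_root_carrier])
qed

lemma not_Ints_dist_pos:
  fixes r :: rat
  assumes "r \<notin> \<int>"
  shows "\<exists>c>0. \<forall>m::int. c \<le> \<bar>of_int m + r\<bar>"
proof (intro exI allI conjI)
  have f0: "frac r > 0"
    using assms frac_ge_0[of r] frac_eq_0_iff[of r] by linarith
  have f1: "frac r < 1"
    by (rule frac_lt_1)
  have r: "r = of_int \<lfloor>r\<rfloor> + frac r"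
    by (simp add: frac_def)
  show "0 < min (frac r) (1 - frac r)"
    using f0 f1 by simp
  fix m :: int
  show "min (frac r) (1 - frac r) \<le> \<bar>of_int m + r\<bar>"
  proof (cases "m + \<lfloor>r\<rfloor> \<ge> 0")
    case True
    then have "(0::rat) \<le> of_int (m + \<lfloor>r\<rfloor>)"
      by linarith
    then show ?thesis
      using f0 f1 r by (simp add: abs_if) linarith
  next
    case False
    then have "of_int (m + \<lfloor>r\<rfloor>) \<le> (-1::rat)"
      by linarith
    then show ?thesis
      using f0 f1 r by (simp add: abs_if)
  qed
qed

section \<open>The quotient value\<close>

context valued
begin

definition pre_value :: "'a formal_sum \<Rightarrow> real" where
  "pre_value x = p (fst x) + (\<Sum>h | snd x h \<noteq> 0. real_of_rat \<bar>snd x h\<bar> * p h)"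

definition hull_value :: "'a formal_sum set \<Rightarrow> real" where
  "hull_value C = Inf (pre_value ` C)"

lemma pre_value_superset:
  "finite S \<Longrightarrow> {h. snd x h \<noteq> 0} \<subseteq> S \<Longrightarrow>
    pre_value x = p (fst x) + (\<Sum>h\<in>S. real_of_rat \<bar>snd x h\<bar> * p h)"
  unfolding pre_value_def by (subst sum.mono_neutral_left[of S]) auto

lemma pre_value_nonneg: "0 \<le> pre_value x"
  unfolding pre_value_def using nonneg by (intro add_nonneg_nonneg sum_nonneg mult_nonneg_nonneg) auto

lemma pre_value_constant: "pre_value (a, \<lambda>h. 0) = p a"
  by (simp add: pre_value_def)

lemma pre_value_coeff_le:
  assumes "x \<in> carrier pre_hull"
  shows "real_of_rat \<bar>snd x h\<bar> * p h \<le> pre_value x"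
proof (cases "snd x h = 0")
  case False
  then have "real_of_rat \<bar>snd x h\<bar> * p h \<le> (\<Sum>h | snd x h \<noteq> 0. real_of_rat \<bar>snd x h\<bar> * p h)"
    using assms nonneg by (intro member_le_sum) (auto simp: pre_hull_carrier)
  then show ?thesis
    using nonneg[of "fst x"] unfolding pre_value_def by linarith
qed (simp add: pre_value_nonneg)

lemma pre_value_inv: "x \<in> carrier pre_hull \<Longrightarrow> pre_value (inv\<^bsub>pre_hull\<^esub> x) = pre_value x"
  by (simp add: pre_value_def pre_hull_inv)

lemma pre_value_mult:
  assumes x: "x \<in> carrier pre_hull" and y: "y \<in> carrier pre_hull"
  shows "pre_value (x \<otimes>\<^bsub>pre_hull\<^esub> y) \<le> pre_value x + pre_value y"
proof -
  let ?S = "{h. snd x h \<noteq> 0} \<union> {h. snd y h \<noteq> 0}"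
  let ?c = "\<lambda>f h. real_of_rat \<bar>f h\<bar> * p h"
  have S: "finite ?S"
    using x y by (auto simp: pre_hull_carrier)
  have "real_of_rat \<bar>snd x h + snd y h\<bar> \<le> real_of_rat \<bar>snd x h\<bar> + real_of_rat \<bar>snd y h\<bar>" for h
    by (metis abs_triangle_ineq of_rat_add of_rat_less_eq)
  then have "?c (\<lambda>h. snd x h + snd y h) h \<le> ?c (snd x) h + ?c (snd y) h" for h
    using nonneg[of h] by (metis distrib_right mult_right_mono)
  then have "(\<Sum>h\<in>?S. ?c (\<lambda>h. snd x h + snd y h) h) \<le> (\<Sum>h\<in>?S. ?c (snd x) h) + (\<Sum>h\<in>?S. ?c (snd y) h)"
    by (simp add: sum.distrib[symmetric] sum_mono)
  with triangle[of "fst x" "fst y"] S show ?thesis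
    by (subst (1 2 3) pre_value_superset[of ?S]) (auto simp: pre_hull_mult)
qed

lemma value_lincomb_le:
  assumes "int_valued f"
  shows "p (lincomb f) \<le> (\<Sum>h | f h \<noteq> 0. real_of_rat \<bar>f h\<bar> * p h)"
proof -
  have "p (zmul \<lfloor>f h\<rfloor> h) \<le> real_of_rat \<bar>f h\<bar> * p h" for h
  proof -
    obtain m where m: "f h = of_int m"
      using assms[unfolded int_valued_def, rule_format, of h] by (auto elim: Ints_cases)
    have "real_of_rat \<bar>of_int m\<bar> = \<bar>real_of_int m\<bar>"
      by (metis abs_of_rat of_rat_of_int_eq)
    then show ?thesis
      using zmul_le[of m h] m by simp
  qed
  then show ?thesis
    unfolding lincomb_def by (rule order_trans[OF sum_le sum_mono])
qed

lemma value_le_pre_value_rel: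
  assumes "k \<in> hull_rel"
  shows "p a \<le> pre_value (k \<otimes>\<^bsub>pre_hull\<^esub> (a, \<lambda>h. 0))"
proof -
  have k: "int_valued (snd k)" "fst k = - lincomb (snd k)"
    using assms by (simp_all add: mem_hull_rel)
  have "p a \<le> p (fst k + a) + p (- fst k)"
    using triangle[of "fst k + a" "- fst k"] by simp
  also have "\<dots> \<le> pre_value (k \<otimes>\<^bsub>pre_hull\<^esub> (a, \<lambda>h. 0))"
    using value_lincomb_le[OF k(1)] k(2) by (simp add: pre_value_def pre_hull_mult)
  finally show ?thesis .
qed

lemma hull_value_le: "y \<in> C \<Longrightarrow> hull_value C \<le> pre_value y"
  unfolding hull_value_def by (rule cInf_lower) (auto intro: bdd_belowI[of _ 0] simp: pre_value_nonneg)

lemma hull_value_ge: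
  assumes "\<And>k. k \<in> hull_rel \<Longrightarrow> c \<le> pre_value (k \<otimes>\<^bsub>pre_hull\<^esub> x)"
  shows "c \<le> hull_value (hull_class x)"
  unfolding hull_value_def
proof (rule cInf_greatest)
  show "pre_value ` hull_class x \<noteq> {}"
    using subgroup.one_closed[OF subgroup_hull_rel] unfolding r_coset_def by blast
qed (use assms in \<open>auto simp: r_coset_def\<close>)

lemma hull_value_nonneg: "0 \<le> hull_value (hull_class x)"
  by (rule hull_value_ge) (rule pre_value_nonneg)

lemma hull_value_emb: "hull_value (hull_emb a) = p a"
proof (rule order_antisym)
  show "hull_value (hull_emb a) \<le> p a"
    using hull_value_le[OF hull_class_self[OF constant_in_pre_hull]]
    by (simp add: hull_emb_def pre_value_constant)
  show "p a \<le> hull_value (hull_emb a)"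
    unfolding hull_emb_def by (rule hull_value_ge) (rule value_le_pre_value_rel)
qed

lemma hull_value_le_rel:
  "k \<in> hull_rel \<Longrightarrow> x \<in> carrier pre_hull \<Longrightarrow>
    hull_value (hull_class x) \<le> pre_value (k \<otimes>\<^bsub>pre_hull\<^esub> x)"
  by (rule hull_value_le) (rule pre_hull.rcosI[OF _ hull_rel_subset])

lemma hull_value_pos_non_int:
  assumes x: "x \<in> carrier pre_hull" and "\<not> int_valued (snd x)"
  shows "0 < hull_value (hull_class x)"
proof -
  obtain h where h: "snd x h \<notin> \<int>"
    using assms unfolding int_valued_def by blast
  then have "h \<noteq> 0"
    using x by (auto simp: pre_hull_carrier)
  then have ph: "p h > 0"
    using nonneg[of h] eq_0_iff[of h] by linarith
  obtain c where c: "c > 0" "\<And>m::int. c \<le> \<bar>of_int m + snd x h\<bar>"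
    using not_Ints_dist_pos[OF h] by blast
  have "real_of_rat c * p h \<le> hull_value (hull_class x)"
  proof (rule hull_value_ge)
    fix k :: "'a formal_sum" assume k: "k \<in> hull_rel"
    then obtain m where m: "snd k h = of_int m"
      by (auto simp: mem_hull_rel int_valued_def elim!: allE[of _ h] Ints_cases)
    have "real_of_rat c \<le> real_of_rat \<bar>snd (k \<otimes>\<^bsub>pre_hull\<^esub> x) h\<bar>"
      using c(2)[of m] m by (simp add: pre_hull_mult of_rat_less_eq)
    then have "real_of_rat c * p h \<le> real_of_rat \<bar>snd (k \<otimes>\<^bsub>pre_hull\<^esub> x) h\<bar> * p h"
      using ph by simp
    also have "\<dots> \<le> pre_value (k \<otimes>\<^bsub>pre_hull\<^esub> x)"
      using k x hull_rel_subset by (intro pre_value_coeff_le) auto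
    finally show "real_of_rat c * p h \<le> pre_value (k \<otimes>\<^bsub>pre_hull\<^esub> x)" .
  qed
  moreover have "0 < real_of_rat c * p h"
    using c(1) ph by simp
  ultimately show ?thesis
    by linarith
qed

lemma hull_value_eq_0_iff:
  assumes "C \<in> carrier rat_hull"
  shows "hull_value C = 0 \<longleftrightarrow> C = \<one>\<^bsub>rat_hull\<^esub>"
proof -
  obtain x where x: "x \<in> carrier pre_hull" "C = hull_class x"
    using assms rat_hull_carrier by blast
  show ?thesis
  proof (cases "int_valued (snd x)")
    case True
    then have C: "C = hull_emb (fst x + lincomb (snd x))"
      using x hull_class_int_valued by simp
    show ?thesis
      unfolding C hull_value_emb hull_emb_0[symmetric] by (simp add: inj_eq[OF inj_hull_emb] eq_0_iff)
  next
    case False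
    have "x \<notin> hull_rel"
      using False by (simp add: mem_hull_rel)
    then have "C \<noteq> hull_rel"
      using hull_class_self[OF x(1)] x(2) by blast
    then show ?thesis
      using hull_value_pos_non_int[OF x(1) False] x(2) by simp
  qed
qed

lemma hull_value_inv_le:
  assumes x: "x \<in> carrier pre_hull"
  shows "hull_value (hull_class (inv\<^bsub>pre_hull\<^esub> x)) \<le> hull_value (hull_class x)"
proof (rule hull_value_ge)
  fix k :: "'a formal_sum" assume k: "k \<in> hull_rel"
  then have kx: "k \<otimes>\<^bsub>pre_hull\<^esub> x \<in> carrier pre_hull"
    using x hull_rel_subset by auto
  have "inv\<^bsub>pre_hull\<^esub> (k \<otimes>\<^bsub>pre_hull\<^esub> x) = inv\<^bsub>pre_hull\<^esub> k \<otimes>\<^bsub>pre_hull\<^esub> inv\<^bsub>pre_hull\<^esub> x"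
    using k x hull_rel_subset by (auto simp: pre_hull.inv_mult)
  moreover have "inv\<^bsub>pre_hull\<^esub> k \<in> hull_rel"
    using k by (rule subgroup.m_inv_closed[OF subgroup_hull_rel])
  ultimately have "hull_value (hull_class (inv\<^bsub>pre_hull\<^esub> x)) \<le> pre_value (inv\<^bsub>pre_hull\<^esub> (k \<otimes>\<^bsub>pre_hull\<^esub> x))"
    using hull_value_le_rel x by simp
  then show "hull_value (hull_class (inv\<^bsub>pre_hull\<^esub> x)) \<le> pre_value (k \<otimes>\<^bsub>pre_hull\<^esub> x)"
    using pre_value_inv[OF kx] by simp
qed

lemma hull_value_inv:
  "x \<in> carrier pre_hull \<Longrightarrow> hull_value (hull_class (inv\<^bsub>pre_hull\<^esub> x)) = hull_value (hull_class x)"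
  using hull_value_inv_le[of x] hull_value_inv_le[of "inv\<^bsub>pre_hull\<^esub> x"] by simp

lemma hull_value_mult:
  assumes x: "x \<in> carrier pre_hull" and y: "y \<in> carrier pre_hull"
  shows "hull_value (hull_class (x \<otimes>\<^bsub>pre_hull\<^esub> y)) \<le> hull_value (hull_class x) + hull_value (hull_class y)"
proof -
  let ?v = "hull_value (hull_class (x \<otimes>\<^bsub>pre_hull\<^esub> y))"
  have "?v - hull_value (hull_class y) \<le> hull_value (hull_class x)"
  proof (rule hull_value_ge)
    fix k :: "'a formal_sum" assume k: "k \<in> hull_rel"
    have "?v - pre_value (k \<otimes>\<^bsub>pre_hull\<^esub> x) \<le> hull_value (hull_class y)"
    proof (rule hull_value_ge)
      fix l :: "'a formal_sum" assume l: "l \<in> hull_rel"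
      have kl: "k \<in> carrier pre_hull" "l \<in> carrier pre_hull"
        using k l hull_rel_subset by auto
      have "?v \<le> pre_value ((k \<otimes>\<^bsub>pre_hull\<^esub> l) \<otimes>\<^bsub>pre_hull\<^esub> (x \<otimes>\<^bsub>pre_hull\<^esub> y))"
        using k l x y by (intro hull_value_le_rel subgroup.m_closed[OF subgroup_hull_rel]) auto
      also have "(k \<otimes>\<^bsub>pre_hull\<^esub> l) \<otimes>\<^bsub>pre_hull\<^esub> (x \<otimes>\<^bsub>pre_hull\<^esub> y)
          = (k \<otimes>\<^bsub>pre_hull\<^esub> x) \<otimes>\<^bsub>pre_hull\<^esub> (l \<otimes>\<^bsub>pre_hull\<^esub> y)"
        using kl x y by (simp add: pre_hull.m_ac)
      also have "pre_value \<dots> \<le> pre_value (k \<otimes>\<^bsub>pre_hull\<^esub> x) + pre_value (l \<otimes>\<^bsub>pre_hull\<^esub> y)"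
        using kl x y by (intro pre_value_mult) auto
      finally show "?v - pre_value (k \<otimes>\<^bsub>pre_hull\<^esub> x) \<le> pre_value (l \<otimes>\<^bsub>pre_hull\<^esub> y)"
        by simp
    qed
    then show "?v - hull_value (hull_class y) \<le> pre_value (k \<otimes>\<^bsub>pre_hull\<^esub> x)"
      by simp
  qed
  then show ?thesis
    by simp
qed

lemma is_group_value_rat_hull: "is_group_value rat_hull hull_value"
  unfolding is_group_value_def rat_hull_carrier
proof (intro conjI ballI; elim imageE)
  fix C D :: "'a formal_sum set" and x y assume x: "x \<in> carrier pre_hull" "C = hull_class x"
    and y: "y \<in> carrier pre_hull" "D = hull_class y"
  show "hull_value (C \<otimes>\<^bsub>rat_hull\<^esub> D) \<le> hull_value C + hull_value D"
    unfolding x(2) y(2) hull_class_mult[OF x(1) y(1)] by (rule hull_value_mult[OF x(1) y(1)])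
next
  fix C :: "'a formal_sum set" and x assume x: "x \<in> carrier pre_hull" "C = hull_class x"
  then show "0 \<le> hull_value C"
    by (simp add: hull_value_nonneg)
  show "hull_value C = 0 \<longleftrightarrow> C = \<one>\<^bsub>rat_hull\<^esub>"
    using x by (intro hull_value_eq_0_iff) (auto simp: rat_hull_carrier)
  show "hull_value (inv\<^bsub>rat_hull\<^esub> C) = hull_value C"
    using x by (simp add: hull_class_inv hull_value_inv)
qed

lemma is_enlargement_rat_hull: "is_enlargement p rat_hull hull_value hull_emb"
  unfolding is_enlargement_def
  by (simp add: comm_group_rat_hull is_group_value_rat_hull hull_emb_carrier inj_hull_emb
      hull_emb_add hull_value_emb)

lemma hull_value_root:
  assumes "m \<ge> 1"
  shows "hull_value (hull_class (hull_root m a)) \<le> p a / real m"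
proof -
  have "hull_value (hull_class (hull_root m a)) \<le> pre_value (hull_root m a)"
    by (rule hull_value_le[OF hull_class_self[OF hull_root_carrier]])
  also have "\<dots> = (if a = 0 then 0 else p a / real m)"
    using assms by (subst pre_value_superset[of "{a}"]) (auto simp: hull_root_def of_rat_divide)
  also have "\<dots> = p a / real m"
    by simp
  finally show ?thesis .
qed

end

section \<open>Enlargements inside the powerset of the group\<close>

lemma inj_on_some_elem:
  assumes "pairwise disjnt A" "{} \<notin> A"
  shows "inj_on (\<lambda>C. SOME x. x \<in> C) A"
proof (rule inj_onI, rule ccontr)
  fix C D assume C: "C \<in> A" and D: "D \<in> A" and eq: "(SOME x. x \<in> C) = (SOME x. x \<in> D)"
    and "C \<noteq> D"
  then have "disjnt C D"
    using assms(1) by (simp add: pairwise_def)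
  moreover have "C \<noteq> {}" "D \<noteq> {}"
    using C D assms(2) by auto
  then have "(SOME x. x \<in> C) \<in> C" "(SOME x. x \<in> D) \<in> D"
    by (simp_all add: some_in_eq)
  ultimately show False
    using eq by (simp add: disjnt_def disjoint_iff)
qed

lemma inj_formal_sum_into_set:
  assumes "infinite (UNIV :: 'a set)"
  shows "\<exists>\<phi> :: 'a formal_sum \<Rightarrow> 'a set. inj \<phi>"
proof -
  have nat_le: "(card_of (UNIV :: nat set), card_of (UNIV :: 'a set)) \<in> ordLeq"
    using assms infinite_iff_card_of_nat by blast
  have "(card_of ((UNIV :: 'a set) \<times> (UNIV :: nat set)), card_of (UNIV :: 'a set)) \<in> ordIso"
    using card_of_Times_infinite[OF assms _ nat_le] by simp
  then obtain f :: "'a \<times> nat \<Rightarrow> 'a" where f: "inj f"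
    using card_of_ordLeq[of "UNIV :: ('a \<times> nat) set" "UNIV :: 'a set"] ordIso_iff_ordLeq by auto
  have f_eq: "f (a, m) = f (b, n) \<longleftrightarrow> a = b \<and> m = n" for a b m n
    using injD[OF f] by auto
  text \<open>The graph of the coefficient function, tagged so that the \<open>G\<close>-component can be recovered.\<close>
  define \<phi> where "\<phi> x = insert (f (fst x, 0)) (range (\<lambda>h. f (h, Suc (to_nat (snd x h)))))"
    for x :: "'a formal_sum"
  have "inj \<phi>"
  proof (rule injI)
    fix x y assume eq: "\<phi> x = \<phi> y"
    have "f (fst x, 0) \<in> \<phi> x"
      by (simp add: \<phi>_def)
    then have "f (fst x, 0) \<in> \<phi> y"
      using eq by simp
    then have "fst x = fst y"
      by (auto simp: \<phi>_def f_eq)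
    moreover have "snd x h = snd y h" for h
    proof -
      have "f (h, Suc (to_nat (snd x h))) \<in> \<phi> x"
        by (simp add: \<phi>_def)
      then have "f (h, Suc (to_nat (snd x h))) \<in> \<phi> y"
        using eq by simp
      then show ?thesis
        by (auto simp: \<phi>_def f_eq)
    qed
    ultimately show "x = y"
      by (simp add: prod_eq_iff fun_eq_iff)
  qed
  then show ?thesis
    by blast
qed

lemma inj_on_some_elem_rat_hull:
  "inj_on (\<lambda>C. SOME x. x \<in> C) (carrier (rat_hull :: 'a::ab_group_add formal_sum set monoid))"
proof (rule inj_on_some_elem)
  have "carrier rat_hull = rcosets\<^bsub>pre_hull\<^esub> hull_rel"
    unfolding FactGroup_def by (rule partial_object.select_convs)
  then show "pairwise disjnt (carrier rat_hull)"
    using pre_hull.rcos_disjoint[OF subgroup_hull_rel] by (rule ssubst)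
  have "C \<noteq> {}" if C: "C \<in> carrier rat_hull" for C
  proof -
    obtain x where "C = hull_class x" "x \<in> carrier pre_hull"
      using C unfolding rat_hull_carrier by (rule imageE)
    then have "x \<in> C"
      by (simp add: hull_class_self)
    then show ?thesis
      by blast
  qed
  then show "{} \<notin> carrier rat_hull"
    by blast
qed

lemma torsion_dense_enlargement_on_sets_finite:
  fixes p :: "'a::ab_group_add \<Rightarrow> real"
  assumes "is_value p" and "finite (UNIV :: 'a set)"
  shows "\<exists>(H :: 'a set monoid) q e. is_enlargement p H q e \<and> torsion_dense H q"
proof -
  interpret additive: comm_group "additive_monoid :: 'a monoid"
    by (rule comm_group_additive_monoid)
  have enl: "is_enlargement p additive_monoid p id"
    by (rule enlargement_additive_monoid[OF assms(1)])
  then have "is_group_value additive_monoid p"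
    by (simp add: is_enlargement_def)
  moreover have "finite (carrier (additive_monoid :: 'a monoid))"
    using assms(2) by (simp add: additive_monoid_def)
  ultimately have "torsion_dense additive_monoid p"
    by (rule torsion_dense_if_finite[OF additive.is_group])
  moreover have "inj_on (\<lambda>x. {x}) (carrier additive_monoid)"
    by (simp add: inj_on_def)
  ultimately show ?thesis
    by (rule torsion_dense_enlargement_transfer[OF enl])
qed

context valued
begin

lemma torsion_dense_rat_hull:
  assumes "class_O0 p"
  shows "torsion_dense rat_hull hull_value"
proof (rule torsion_dense_if_roots[OF is_enlargement_rat_hull assms hull_multiple_in_emb])
  fix a :: 'a and m :: nat assume "m \<ge> 1"
  have "hull_class (hull_root m a) \<in> carrier rat_hull"
    unfolding rat_hull_carrier by (rule imageI[OF hull_root_carrier])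
  with \<open>m \<ge> 1\<close> show "\<exists>r\<in>carrier rat_hull. r [^]\<^bsub>rat_hull\<^esub> m = hull_emb a \<and> hull_value r \<le> p a / real m"
    by (intro bexI[of _ "hull_class (hull_root m a)"] conjI hull_root_pow hull_value_root)
qed

text \<open>For finite \<open>G\<close> every element has finite order; for infinite \<open>G\<close> the rational hull is
  small enough to be copied into \<open>'a set\<close>.\<close>

lemma torsion_dense_enlargement_on_sets:
  assumes "class_O0 p"
  shows "\<exists>(H :: 'a set monoid) q e. is_enlargement p H q e \<and> torsion_dense H q"
proof (cases "finite (UNIV :: 'a set)")
  case True
  then show ?thesis
    by (rule torsion_dense_enlargement_on_sets_finite[OF is_value])
next
  case False
  then obtain \<phi> :: "'a formal_sum \<Rightarrow> 'a set" where \<phi>: "inj \<phi>"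
    using inj_formal_sum_into_set by blast
  have "inj_on (\<phi> \<circ> (\<lambda>C. SOME x. x \<in> C)) (carrier rat_hull)"
    by (rule comp_inj_on[OF inj_on_some_elem_rat_hull inj_on_subset[OF \<phi> subset_UNIV]])
  then show ?thesis
    by (rule torsion_dense_enlargement_transfer[OF is_enlargement_rat_hull
          torsion_dense_rat_hull[OF assms]])
qed

end

theorem theorem2p12:
  fixes p :: "'a::ab_group_add \<Rightarrow> real"
  assumes "is_value p"
  shows "(class_O0 p \<longleftrightarrow>
            (\<exists>(H :: 'a set monoid) q e. is_enlargement p H q e \<and> torsion_dense H q))
       \<and> ((\<exists>(H :: ('b, 'c) monoid_scheme) q e. is_enlargement p H q e \<and> torsion_dense H q)
            \<longrightarrow> class_O0 p)"
proof (intro conjI iffI impI)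
  assume "class_O0 p"
  then show "\<exists>(H :: 'a set monoid) q e. is_enlargement p H q e \<and> torsion_dense H q"
    by (rule valued.torsion_dense_enlargement_on_sets[OF valued.intro[OF assms]])
next
  assume "\<exists>(H :: 'a set monoid) q e. is_enlargement p H q e \<and> torsion_dense H q"
  then show "class_O0 p"
    using class_O0_if_torsion_dense_enlargement[OF assms] by blast
next
  assume "\<exists>(H :: ('b, 'c) monoid_scheme) q e. is_enlargement p H q e \<and> torsion_dense H q"
  then show "class_O0 p"
    using class_O0_if_torsion_dense_enlargement[OF assms] by blast
qed

end
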